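(* Fix $\theta\in\Theta$ and $0<\varepsilon<1$. Suppose that under $P_\theta$: (a) $2\big(\ell(\hat\theta_n;Y^{(n)})-\ell(\theta;Y^{(n)})\big)\to\chi^2_p$ in distribution; (b) the Laplace approximation holds in the form $q_n(Y^{(n)})=p_n(Y^{(n)};\hat\theta_n)\,\pi(\hat\theta_n)(2\pi)^{p/2}|j_n(\hat\theta_n)|^{-1/2}\,(1+o_p(1))$; (c) $\pi(\hat\theta_n)=O_p(1)$ and $\log|j_n(\hat\theta_n)|=p\log n+O_p(1)$. Then $$\lim_{n\to\infty}P_\theta\big(\theta\in\hat\Theta_{1-\varepsilon}(Y^{(n)})\big)=1 .$$
   Context: $Y^{(n)}=(Y_1,\ldots,Y_n)$ has density $p_n(y^{(n)};\theta)$, $\theta\in\Theta\subseteq\mathbb{R}^p$ open, strictly positive on a support not depending on $\theta$. $\ell(\theta;y^{(n)})=\log p_n(y^{(n)};\theta)$ is the log likelihood, $\hat\theta_n$ the maximum likelihood estimate, and $j_n(\theta)=-\partial^2\ell(\theta;y^{(n)})/\partial\theta\partial\theta^\top$ the observed information, with $|\cdot|$ the determinant. For a strictly positive probability density $\pi$ on $\Theta$, $q_n(y^{(n)})=\int_\Theta p_n(y^{(n)};\theta)\pi(\theta)d\theta$ and Robbins' region is $\hat\Theta_{1-\varepsilon}(y^{(n)})=\{\theta\in\Theta:p_n(y^{(n)};\theta)\ge\varepsilon q_n(y^{(n)})\}$. *)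

theory Defs
  imports "HOL-Probability.Probability"
begin

definition chi2_density :: "nat \<Rightarrow> real \<Rightarrow> real" where
  "chi2_density k x =
     (if x > 0 then x powr (real k / 2 - 1) * exp (- x / 2) / (2 powr (real k / 2) * Gamma (real k / 2))
      else 0)"

definition chi2_distribution :: "nat \<Rightarrow> real measure" where
  "chi2_distribution k = density lborel (\<lambda>x. ennreal (chi2_density k x))"

definition conv_in_distribution :: "'w measure \<Rightarrow> (nat \<Rightarrow> 'w \<Rightarrow> real) \<Rightarrow> real measure \<Rightarrow> bool" where
  "conv_in_distribution M X L \<longleftrightarrow>
     (\<forall>n. X n \<in> borel_measurable M) \<and> weak_conv_m (\<lambda>n. distr M borel (X n)) L"

definition small_o_p_1 :: "'w measure \<Rightarrow> (nat \<Rightarrow> 'w \<Rightarrow> real) \<Rightarrow> bool" where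
  "small_o_p_1 M X \<longleftrightarrow>
     (\<forall>n. X n \<in> borel_measurable M) \<and>
     (\<forall>\<delta>>0. (\<lambda>n. measure M {\<omega>\<in>space M. \<bar>X n \<omega>\<bar> > \<delta>}) \<longlonglongrightarrow> 0)"

definition big_O_p_1 :: "'w measure \<Rightarrow> (nat \<Rightarrow> 'w \<Rightarrow> real) \<Rightarrow> bool" where
  "big_O_p_1 M X \<longleftrightarrow>
     (\<forall>n. X n \<in> borel_measurable M) \<and>
     (\<forall>\<eta>>0. \<exists>K. \<exists>N. \<forall>n\<ge>N. measure M {\<omega>\<in>space M. \<bar>X n \<omega>\<bar> > K} < \<eta>)"

definition partial_deriv :: "'p::finite \<Rightarrow> (real^'p \<Rightarrow> real) \<Rightarrow> real^'p \<Rightarrow> real" where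
  "partial_deriv i f x = deriv (\<lambda>h. f (x + h *\<^sub>R axis i 1)) 0"

definition hessian :: "(real^'p::finite \<Rightarrow> real) \<Rightarrow> real^'p \<Rightarrow> real^'p^'p" where
  "hessian f x = (\<chi> i k. partial_deriv i (partial_deriv k f) x)"

definition loglik :: "('y \<Rightarrow> real^'p \<Rightarrow> real) \<Rightarrow> real^'p \<Rightarrow> 'y \<Rightarrow> real" where
  "loglik pn t y = ln (pn y t)"

definition obs_info :: "('y \<Rightarrow> real^'p::finite \<Rightarrow> real) \<Rightarrow> real^'p \<Rightarrow> 'y \<Rightarrow> real^'p^'p" where
  "obs_info pn t y = - hessian (\<lambda>s. ln (pn y s)) t"

definition marginal :: "(real^'p::finite) set \<Rightarrow> ('y \<Rightarrow> real^'p \<Rightarrow> real) \<Rightarrow> (real^'p \<Rightarrow> real) \<Rightarrow> 'y \<Rightarrow> real" where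
  "marginal \<Theta> pn \<pi> y = (LINT t:\<Theta>|lborel. pn y t * \<pi> t)"

definition robbins_region :: "(real^'p::finite) set \<Rightarrow> ('y \<Rightarrow> real^'p \<Rightarrow> real) \<Rightarrow> (real^'p \<Rightarrow> real) \<Rightarrow> real \<Rightarrow> 'y \<Rightarrow> (real^'p) set" where
  "robbins_region \<Theta> pn \<pi> \<epsilon> y = {t\<in>\<Theta>. pn y t \<ge> \<epsilon> * marginal \<Theta> pn \<pi> y}"

end

theory Submission
  imports Defs
begin

text \<open>
  As \<open>\<theta> \<in> \<Theta>\<close>, the parameter lies in Robbins' region iff \<open>\<epsilon> q_n / p_n(\<theta>) \<le> 1\<close>.
  By the Laplace approximation this ratio equals
  \<open>\<epsilon> exp(W_n / 2) \<pi>(\<theta>hat_n) (2 pi)^(p/2) |j_n(\<theta>hat_n)|^(-1/2) (1 + R_n)\<close>,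
  where \<open>W_n\<close> is the likelihood ratio statistic. Writing
  \<open>|j_n|^(-1/2) = exp(-O_p(1) / 2) n^(-p/2)\<close>, the ratio is a product of factors that are bounded
  above in probability (\<open>W_n\<close> because it converges in distribution, the others by (b) and (c))
  times the deterministic \<open>n^(-p/2) \<longrightarrow> 0\<close>, so it is at most 1 with probability tending to 1.
\<close>

lemma nn_integral_chi2_density:
  assumes k: "k \<ge> 1"
  shows "(\<integral>\<^sup>+x. ennreal (chi2_density k x) \<partial>lborel) = 1"
proof -
  define s where "s = real k / 2"
  have s: "s > 0" using k by (simp add: s_def)
  have Gamma_pos: "Gamma s > 0" using s by (simp add: Gamma_real_pos)
  have meas: "(\<lambda>x. ennreal (chi2_density k x)) \<in> borel_measurable borel"
    unfolding chi2_density_def by measurable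
  have rescaled: "2 * chi2_density k (0 + 2 * x) = indicator {0..} x * x powr (s - 1) / exp x / Gamma s" for x :: real
  proof (cases "x > 0")
    case True
    have "(2*x) powr (s - 1) = 2 powr (s-1) * x powr (s-1)" using True by (simp add: powr_mult)
    moreover have "2 powr s = 2 * 2 powr (s-1)" by (simp add: powr_diff)
    moreover have "exp (-(2*x)/2) = 1 / exp x" by (simp add: exp_minus field_simps)
    ultimately show ?thesis using True Gamma_pos unfolding chi2_density_def s_def[symmetric]
      by (simp add: field_simps)
  next
    case False
    then show ?thesis by (cases "x = 0") (auto simp: chi2_density_def indicator_def)
  qed
  \<comment> \<open>substituting \<open>x = 2u\<close> turns the density into the integrand of \<open>Gamma s\<close>\<close>
  have "(\<integral>\<^sup>+x. ennreal (chi2_density k x) \<partial>lborel) = \<bar>2::real\<bar> * (\<integral>\<^sup>+x. ennreal (chi2_density k (0 + 2 * x)) \<partial>lborel)"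
    by (rule nn_integral_real_affine[OF meas]) simp
  also have "\<dots> = (\<integral>\<^sup>+x. ennreal 2 * ennreal (chi2_density k (0 + 2 * x)) \<partial>lborel)"
    by (subst nn_integral_cmult) (use meas in auto)
  also have "\<dots> = (\<integral>\<^sup>+x. ennreal (indicator {0..} x * x powr (s - 1) / exp x) * ennreal (1 / Gamma s) \<partial>lborel)"
  proof (rule nn_integral_cong)
    fix x :: real
    have "ennreal 2 * ennreal (chi2_density k (0 + 2 * x)) = ennreal (2 * chi2_density k (0 + 2 * x))"
      by (simp add: ennreal_mult')
    also have "\<dots> = ennreal (indicator {0..} x * x powr (s - 1) / exp x * (1 / Gamma s))"
      using rescaled[of x] by simp
    also have "\<dots> = ennreal (indicator {0..} x * x powr (s - 1) / exp x) * ennreal (1 / Gamma s)"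
      using Gamma_pos by (intro ennreal_mult) (auto simp: indicator_def)
    finally show "ennreal 2 * ennreal (chi2_density k (0 + 2 * x)) = \<dots>" .
  qed
  also have "\<dots> = (\<integral>\<^sup>+x. ennreal (indicator {0..} x * x powr (s - 1) / exp x) \<partial>lborel) * ennreal (1 / Gamma s)"
    by (rule nn_integral_multc) measurable
  also have "\<dots> = ennreal (Gamma s) * ennreal (1 / Gamma s)"
    by (simp add: Gamma_conv_nn_integral_real[OF s])
  also have "\<dots> = 1" using Gamma_pos by (simp flip: ennreal_mult)
  finally show ?thesis .
qed

lemma real_distribution_chi2:
  assumes k: "k \<ge> 1"
  shows "real_distribution (chi2_distribution k)"
proof -
  have "prob_space (chi2_distribution k)"
  proof (rule prob_spaceI)
    have "emeasure (chi2_distribution k) UNIV = (\<integral>\<^sup>+x. ennreal (chi2_density k x) * indicator UNIV x \<partial>lborel)"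
      unfolding chi2_distribution_def by (rule emeasure_density) (auto simp: chi2_density_def)
    then show "emeasure (chi2_distribution k) (space (chi2_distribution k)) = 1"
      by (simp add: chi2_distribution_def nn_integral_chi2_density[OF k])
  qed
  then show ?thesis unfolding real_distribution_def real_distribution_axioms_def
    by (simp add: chi2_distribution_def)
qed

lemma (in real_distribution) exists_continuity_point_ge:
  "\<exists>x\<ge>a. measure M {x} = 0"
proof -
  have "\<not> {a<..<a+1} \<subseteq> {x. measure M {x} > 0}"
    using countable_atoms countable_subset uncountable_open_interval[of a "a+1"] by auto
  then obtain x where "x \<in> {a<..<a+1} - {x. measure M {x} > 0}" by blast
  then show ?thesis by (intro exI[of _ x]) (use measure_nonneg[of M "{x}"] in auto)
qed

definition bounded_above_in_prob :: "'w measure \<Rightarrow> (nat \<Rightarrow> 'w \<Rightarrow> real) \<Rightarrow> bool" where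
  "bounded_above_in_prob M X \<longleftrightarrow>
     (\<forall>n. X n \<in> borel_measurable M) \<and>
     (\<forall>\<eta>>0. \<exists>K. \<exists>N. \<forall>n\<ge>N. measure M {\<omega>\<in>space M. X n \<omega> > K} < \<eta>)"

lemma conv_in_distribution_bounded_above_in_prob:
  assumes M: "prob_space M" and L: "real_distribution L"
    and X: "conv_in_distribution M X L"
  shows "bounded_above_in_prob M X"
  unfolding bounded_above_in_prob_def
proof (intro conjI allI impI)
  interpret P: prob_space M by (rule M)
  interpret L: real_distribution L by (rule L)
  show Xm: "X n \<in> borel_measurable M" for n
    using X by (simp add: conv_in_distribution_def)
  fix \<eta> :: real assume \<eta>: "\<eta> > 0"
  have "\<forall>\<^sub>F x in at_top. cdf L x > 1 - \<eta>"
    using order_tendstoD(1)[OF L.cdf_lim_at_top_prob] \<eta> by simp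
  then obtain K0 where K0: "\<And>x. x \<ge> K0 \<Longrightarrow> cdf L x > 1 - \<eta>"
    by (auto simp: eventually_at_top_linorder)
  obtain K where "K \<ge> K0" and "measure L {K} = 0"
    using L.exists_continuity_point_ge by blast
  then have K: "cdf L K > 1 - \<eta>" and "isCont (cdf L) K"
    using K0 L.isCont_cdf by auto
  then have "(\<lambda>n. cdf (distr M borel (X n)) K) \<longlonglongrightarrow> cdf L K"
    using X by (simp add: conv_in_distribution_def weak_conv_m_def weak_conv_def)
  from order_tendstoD(1)[OF this K] obtain N
    where N: "\<And>n. n \<ge> N \<Longrightarrow> cdf (distr M borel (X n)) K > 1 - \<eta>"
    by (auto simp: eventually_sequentially)
  have "measure M {\<omega>\<in>space M. X n \<omega> > K} < \<eta>" if "n \<ge> N" for n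
  proof -
    have "{\<omega>\<in>space M. X n \<omega> > K} = space M - (X n -` {..K} \<inter> space M)" by auto
    then have "measure M {\<omega>\<in>space M. X n \<omega> > K} = 1 - cdf (distr M borel (X n)) K"
      using Xm by (simp add: P.prob_compl cdf_def measure_distr)
    then show ?thesis using N[OF that] by simp
  qed
  then show "\<exists>K N. \<forall>n\<ge>N. measure M {\<omega>\<in>space M. X n \<omega> > K} < \<eta>" by blast
qed

lemma big_O_p_1_imp_bounded_above_in_prob_abs:
  "big_O_p_1 M X \<Longrightarrow> bounded_above_in_prob M (\<lambda>n \<omega>. \<bar>X n \<omega>\<bar>)"
  by (simp add: big_O_p_1_def bounded_above_in_prob_def borel_measurable_abs)

lemma small_o_p_1_imp_big_O_p_1:
  assumes "small_o_p_1 M X"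
  shows "big_O_p_1 M X"
  unfolding big_O_p_1_def
proof (intro conjI allI impI)
  show "X n \<in> borel_measurable M" for n
    using assms by (simp add: small_o_p_1_def)
  fix \<eta> :: real assume "\<eta> > 0"
  moreover have "(\<lambda>n. measure M {\<omega>\<in>space M. \<bar>X n \<omega>\<bar> > 1}) \<longlonglongrightarrow> 0"
    using assms by (simp add: small_o_p_1_def)
  ultimately have "\<forall>\<^sub>F n in sequentially. measure M {\<omega>\<in>space M. \<bar>X n \<omega>\<bar> > 1} < \<eta>"
    by (rule order_tendstoD(2)[rotated])
  then show "\<exists>K N. \<forall>n\<ge>N. measure M {\<omega>\<in>space M. \<bar>X n \<omega>\<bar> > K} < \<eta>"
    by (auto simp: eventually_sequentially)
qed

lemma bounded_above_in_prob_comp_mono: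
  assumes M: "prob_space M" and g: "mono g" and X: "bounded_above_in_prob M X"
  shows "bounded_above_in_prob M (\<lambda>n \<omega>. g (X n \<omega>))"
  unfolding bounded_above_in_prob_def
proof (intro conjI allI impI)
  interpret prob_space M by (rule M)
  have Xm: "X n \<in> borel_measurable M" for n
    using X by (simp add: bounded_above_in_prob_def)
  then show "(\<lambda>\<omega>. g (X n \<omega>)) \<in> borel_measurable M" for n
    using borel_measurable_mono[OF g] by measurable
  fix \<eta> :: real assume "\<eta> > 0"
  then obtain K N where N: "\<And>n. n \<ge> N \<Longrightarrow> measure M {\<omega>\<in>space M. X n \<omega> > K} < \<eta>"
    using X unfolding bounded_above_in_prob_def by meson
  have "measure M {\<omega>\<in>space M. g (X n \<omega>) > g K} \<le> measure M {\<omega>\<in>space M. X n \<omega> > K}" for n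
  proof (rule finite_measure_mono)
    show "{\<omega>\<in>space M. g (X n \<omega>) > g K} \<subseteq> {\<omega>\<in>space M. X n \<omega> > K}"
      using monoD[OF g, of "X n _" K] by (force simp: not_less[symmetric])
  qed (use Xm in measurable)
  with N show "\<exists>K N. \<forall>n\<ge>N. measure M {\<omega>\<in>space M. g (X n \<omega>) > K} < \<eta>"
    by (meson order.strict_trans1)
qed

lemma bounded_above_in_prob_mult:
  assumes M: "prob_space M"
    and X: "bounded_above_in_prob M X" and X_nonneg: "\<And>n \<omega>. X n \<omega> \<ge> 0"
    and Y: "bounded_above_in_prob M Y" and Y_nonneg: "\<And>n \<omega>. Y n \<omega> \<ge> 0"
  shows "bounded_above_in_prob M (\<lambda>n \<omega>. X n \<omega> * Y n \<omega>)"
  unfolding bounded_above_in_prob_def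
proof (intro conjI allI impI)
  interpret prob_space M by (rule M)
  have Xm: "X n \<in> borel_measurable M" and Ym: "Y n \<in> borel_measurable M" for n
    using X Y by (simp_all add: bounded_above_in_prob_def)
  then show "(\<lambda>\<omega>. X n \<omega> * Y n \<omega>) \<in> borel_measurable M" for n
    by measurable
  fix \<eta> :: real assume "\<eta> > 0"
  then have "\<eta> / 2 > 0" by simp
  then obtain K1 N1 K2 N2 where
      N1: "\<And>n. n \<ge> N1 \<Longrightarrow> measure M {\<omega>\<in>space M. X n \<omega> > K1} < \<eta> / 2" and
      N2: "\<And>n. n \<ge> N2 \<Longrightarrow> measure M {\<omega>\<in>space M. Y n \<omega> > K2} < \<eta> / 2"
    using X Y unfolding bounded_above_in_prob_def by meson
  define K where "K = max K1 0 * max K2 0"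
  have "measure M {\<omega>\<in>space M. X n \<omega> * Y n \<omega> > K} < \<eta>" if n: "n \<ge> max N1 N2" for n
  proof -
    have "X n \<omega> * Y n \<omega> \<le> K" if "X n \<omega> \<le> K1" "Y n \<omega> \<le> K2" for \<omega>
      unfolding K_def using that X_nonneg[of n \<omega>] Y_nonneg[of n \<omega>] by (intro mult_mono) auto
    then have "{\<omega>\<in>space M. X n \<omega> * Y n \<omega> > K}
        \<subseteq> {\<omega>\<in>space M. X n \<omega> > K1} \<union> {\<omega>\<in>space M. Y n \<omega> > K2}"
      by (force simp: not_less[symmetric])
    then have "measure M {\<omega>\<in>space M. X n \<omega> * Y n \<omega> > K}
        \<le> measure M ({\<omega>\<in>space M. X n \<omega> > K1} \<union> {\<omega>\<in>space M. Y n \<omega> > K2})"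
      by (intro finite_measure_mono) (use Xm Ym in measurable)
    also have "\<dots> \<le> measure M {\<omega>\<in>space M. X n \<omega> > K1} + measure M {\<omega>\<in>space M. Y n \<omega> > K2}"
      by (intro measure_Un_le) (use Xm Ym in measurable)
    also have "\<dots> < \<eta>"
      using N1 N2 n by fastforce
    finally show ?thesis .
  qed
  then show "\<exists>K N. \<forall>n\<ge>N. measure M {\<omega>\<in>space M. X n \<omega> * Y n \<omega> > K} < \<eta>"
    by blast
qed

lemma bounded_above_in_prob_laplace_factor:
  assumes M: "prob_space M" and "real_distribution Q"
    and "conv_in_distribution M L Q" and "big_O_p_1 M A" and "big_O_p_1 M D" and "small_o_p_1 M R"
  shows "bounded_above_in_prob M
    (\<lambda>n \<omega>. exp (L n \<omega> / 2) * \<bar>A n \<omega>\<bar> * exp (\<bar>D n \<omega>\<bar> / 2) * (1 + \<bar>R n \<omega>\<bar>))"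
proof (intro bounded_above_in_prob_mult[OF M])
  have mono_exp_half: "mono (\<lambda>x::real. exp (x / 2))" and mono_add1: "mono (\<lambda>x::real. 1 + x)"
    by (auto intro!: monoI)
  show "bounded_above_in_prob M (\<lambda>n \<omega>. exp (L n \<omega> / 2))"
    using conv_in_distribution_bounded_above_in_prob[OF M assms(2,3)]
    by (rule bounded_above_in_prob_comp_mono[OF M mono_exp_half])
  show "bounded_above_in_prob M (\<lambda>n \<omega>. \<bar>A n \<omega>\<bar>)"
    using assms(4) by (rule big_O_p_1_imp_bounded_above_in_prob_abs)
  show "bounded_above_in_prob M (\<lambda>n \<omega>. exp (\<bar>D n \<omega>\<bar> / 2))"
    using big_O_p_1_imp_bounded_above_in_prob_abs[OF assms(5)]
    by (rule bounded_above_in_prob_comp_mono[OF M mono_exp_half])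
  show "bounded_above_in_prob M (\<lambda>n \<omega>. 1 + \<bar>R n \<omega>\<bar>)"
    using big_O_p_1_imp_bounded_above_in_prob_abs[OF small_o_p_1_imp_big_O_p_1[OF assms(6)]]
    by (rule bounded_above_in_prob_comp_mono[OF M mono_add1])
qed auto

lemma prob_tendsto_one_if_scaled_bounded_above_le_one:
  assumes M: "prob_space M" and U: "bounded_above_in_prob M U"
    and a: "a \<longlonglongrightarrow> 0" "\<And>n. a n \<ge> 0"
    and E: "\<And>n. E n \<in> sets M" "\<And>n. {\<omega>\<in>space M. U n \<omega> * a n \<le> 1} \<subseteq> E n"
  shows "(\<lambda>n. measure M (E n)) \<longlonglongrightarrow> 1"
proof (rule LIMSEQ_I)
  interpret prob_space M by (rule M)
  have Um: "U n \<in> borel_measurable M" for n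
    using U by (simp add: bounded_above_in_prob_def)
  fix r :: real assume "r > 0"
  then obtain K N1 where N1: "\<And>n. n \<ge> N1 \<Longrightarrow> measure M {\<omega>\<in>space M. U n \<omega> > K} < r"
    using U unfolding bounded_above_in_prob_def by meson
  have "\<forall>\<^sub>F n in sequentially. a n < 1 / (max K 0 + 1)"
    by (rule order_tendstoD(2)[OF a(1)]) (simp add: add_nonneg_pos)
  then obtain N2 where N2: "\<And>n. n \<ge> N2 \<Longrightarrow> a n * (max K 0 + 1) < 1"
    by (auto simp: eventually_sequentially pos_less_divide_eq add_nonneg_pos)
  have "norm (measure M (E n) - 1) < r" if n: "n \<ge> max N1 N2" for n
  proof -
    have "space M - E n \<subseteq> {\<omega>\<in>space M. U n \<omega> > K}"
    proof clarify
      fix \<omega> assume \<omega>: "\<omega> \<in> space M" "\<omega> \<notin> E n"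
      show "U n \<omega> > K"
      proof (rule ccontr)
        assume "\<not> U n \<omega> > K"
        then have "U n \<omega> * a n \<le> (max K 0 + 1) * a n"
          using a(2)[of n] by (intro mult_right_mono) auto
        also have "\<dots> < 1" using N2[of n] n by (simp add: mult.commute)
        finally show False using E(2)[of n] \<omega> by auto
      qed
    qed
    then have "measure M (space M - E n) \<le> measure M {\<omega>\<in>space M. U n \<omega> > K}"
      by (intro finite_measure_mono) (use Um in measurable)
    then show ?thesis
      using N1[of n] n prob_compl[OF E(1)] prob_le_1[of "E n"] by simp
  qed
  then show "\<exists>N. \<forall>n\<ge>N. norm (measure M (E n) - 1) < r" by blast
qed

lemma tendsto_exp_neg_half_ln_power:
  assumes "k \<ge> 1"
  shows "(\<lambda>n. exp (- (real k * ln (real n)) / 2)) \<longlonglongrightarrow> 0"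
proof -
  have "filterlim (\<lambda>n. ln (real n)) at_top sequentially"
    by (rule filterlim_compose[OF ln_at_top filterlim_real_sequentially])
  then have "filterlim (\<lambda>n. real k / 2 * ln (real n)) at_top sequentially"
    using assms by (intro filterlim_tendsto_pos_mult_at_top[OF tendsto_const]) auto
  then have "filterlim (\<lambda>n. - (real k * ln (real n)) / 2) at_bot sequentially"
    by (simp add: filterlim_uminus_at_top)
  then show ?thesis
    by (rule filterlim_compose[OF exp_at_bot])
qed

lemma marginal_measurable:
  assumes "\<Theta> \<in> sets lborel" and "\<pi> \<in> borel_measurable lborel"
    and "(\<lambda>(y, t). pn y t) \<in> borel_measurable (\<nu> \<Otimes>\<^sub>M lborel)"
  shows "marginal \<Theta> pn \<pi> \<in> borel_measurable \<nu>"
proof -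
  have "(\<lambda>(y, t). indicator \<Theta> t *\<^sub>R (pn y t * \<pi> t)) \<in> borel_measurable (\<nu> \<Otimes>\<^sub>M lborel)"
    using assms by measurable
  from lborel.borel_measurable_lebesgue_integral[OF this] show ?thesis
    by (simp add: marginal_def[abs_def] set_lebesgue_integral_def)
qed

lemma robbins_event_measurable:
  assumes "Y \<in> measurable M \<nu>" and "open \<Theta>" and "\<theta> \<in> \<Theta>"
    and "\<pi> \<in> borel_measurable lborel"
    and pn: "(\<lambda>(y, t). pn y t) \<in> borel_measurable (\<nu> \<Otimes>\<^sub>M lborel)"
  shows "{\<omega>\<in>space M. \<theta> \<in> robbins_region \<Theta> pn \<pi> \<epsilon> (Y \<omega>)} \<in> sets M"
proof -
  have "(\<lambda>y. (y, \<theta>)) \<in> measurable \<nu> (\<nu> \<Otimes>\<^sub>M lborel)"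
    by measurable
  from measurable_compose[OF this pn] have "(\<lambda>y. pn y \<theta>) \<in> borel_measurable \<nu>"
    by simp
  moreover have "marginal \<Theta> pn \<pi> \<in> borel_measurable \<nu>"
    using assms by (intro marginal_measurable) auto
  ultimately show ?thesis
    using assms(1,3) by (simp add: robbins_region_def) measurable
qed

lemma laplace_approx_le_density:
  fixes p0 h A c d R nk \<epsilon> :: real
  assumes p0: "p0 > 0" and h: "h > 0" and c: "c \<ge> 0" and \<epsilon>: "\<epsilon> \<ge> 0"
    and small: "exp (ln h - ln p0) * \<bar>A\<bar> * exp (\<bar>ln d - nk\<bar> / 2) * (1 + \<bar>R\<bar>)
                * (\<epsilon> * c * exp (- nk / 2)) \<le> 1"
  shows "\<epsilon> * (h * A * c * d powr (- 1 / 2) * (1 + R)) \<le> p0"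
proof -
  have h_eq: "h = p0 * exp (ln h - ln p0)"
    using p0 h by (simp add: exp_diff)
  have "d powr (- 1 / 2) \<le> exp (- ln d / 2)" \<comment> \<open>also for \<open>d \<le> 0\<close>, where \<open>powr\<close> yields 0\<close>
    by (simp add: powr_def)
  also have "\<dots> = exp (- (ln d - nk) / 2) * exp (- nk / 2)"
    by (simp flip: exp_add add: field_simps)
  also have "\<dots> \<le> exp (\<bar>ln d - nk\<bar> / 2) * exp (- nk / 2)"
    by (simp add: abs_if)
  finally have d_le: "d powr (- 1 / 2) \<le> exp (\<bar>ln d - nk\<bar> / 2) * exp (- nk / 2)" .
  have AR_le: "A * (1 + R) \<le> \<bar>A\<bar> * (1 + \<bar>R\<bar>)"
  proof -
    have "A * (1 + R) \<le> \<bar>A\<bar> * \<bar>1 + R\<bar>"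
      by (metis abs_ge_self abs_mult)
    also have "\<dots> \<le> \<bar>A\<bar> * (1 + \<bar>R\<bar>)"
      by (intro mult_left_mono) auto
    finally show ?thesis .
  qed
  have "\<epsilon> * (h * A * c * d powr (- 1 / 2) * (1 + R))
        = \<epsilon> * h * c * d powr (- 1 / 2) * (A * (1 + R))"
    by (simp add: ac_simps)
  also have "\<dots> \<le> \<epsilon> * h * c * d powr (- 1 / 2) * (\<bar>A\<bar> * (1 + \<bar>R\<bar>))"
    using \<epsilon> h c by (intro mult_left_mono[OF AR_le]) auto
  also have "\<dots> \<le> \<epsilon> * h * c * (exp (\<bar>ln d - nk\<bar> / 2) * exp (- nk / 2)) * (\<bar>A\<bar> * (1 + \<bar>R\<bar>))"
    using \<epsilon> h c d_le by (intro mult_right_mono mult_left_mono) auto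
  also have "\<dots> = p0 * (exp (ln h - ln p0) * \<bar>A\<bar> * exp (\<bar>ln d - nk\<bar> / 2) * (1 + \<bar>R\<bar>)
                * (\<epsilon> * c * exp (- nk / 2)))"
    by (subst h_eq) (simp add: ac_simps)
  also have "\<dots> \<le> p0"
    using mult_left_mono[OF small] p0 by simp
  finally show ?thesis .
qed

theorem mainTheorem11:
  fixes M :: "'w measure"
    and \<nu> :: "nat \<Rightarrow> 'y measure"
    and Y :: "nat \<Rightarrow> 'w \<Rightarrow> 'y"
    and p :: "nat \<Rightarrow> 'y \<Rightarrow> real^'p::finite \<Rightarrow> real"
    and \<Theta> :: "(real^'p) set"
    and \<pi> :: "real^'p \<Rightarrow> real"
    and \<theta>hat :: "nat \<Rightarrow> 'y \<Rightarrow> real^'p"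
    and \<theta> :: "real^'p"
    and \<epsilon> :: real
  assumes M: "prob_space M"
    and \<Theta>_open: "open \<Theta>"
    and \<theta>_in: "\<theta> \<in> \<Theta>"
    and \<epsilon>_pos: "0 < \<epsilon>" and \<epsilon>_lt1: "\<epsilon> < 1"
    and \<nu>_sf: "\<And>n. sigma_finite_measure (\<nu> n)"
    and p_pos: "\<And>n y t. y \<in> space (\<nu> n) \<Longrightarrow> t \<in> \<Theta> \<Longrightarrow> p n y t > 0"
    and p_meas: "\<And>n. (\<lambda>(y, t). p n y t) \<in> borel_measurable (\<nu> n \<Otimes>\<^sub>M lborel)"
    and p_density: "\<And>n t. t \<in> \<Theta> \<Longrightarrow> prob_space (density (\<nu> n) (\<lambda>y. ennreal (p n y t)))"
    and Y_distr: "\<And>n. distributed M (\<nu> n) (Y n) (\<lambda>y. ennreal (p n y \<theta>))"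
    and \<pi>_meas: "\<pi> \<in> borel_measurable lborel"
    and \<pi>_pos: "\<And>t. t \<in> \<Theta> \<Longrightarrow> \<pi> t > 0"
    and \<pi>_int: "set_integrable lborel \<Theta> \<pi>"
    and \<pi>_one: "(LINT t:\<Theta>|lborel. \<pi> t) = 1"
    and \<theta>hat_meas: "\<And>n. \<theta>hat n \<in> borel_measurable (\<nu> n)"
    and \<theta>hat_in: "\<And>n y. y \<in> space (\<nu> n) \<Longrightarrow> \<theta>hat n y \<in> \<Theta>"
    and \<theta>hat_max: "\<And>n y t. y \<in> space (\<nu> n) \<Longrightarrow> t \<in> \<Theta> \<Longrightarrow> p n y t \<le> p n y (\<theta>hat n y)"
    and a: "conv_in_distribution M
              (\<lambda>n \<omega>. 2 * (loglik (p n) (\<theta>hat n (Y n \<omega>)) (Y n \<omega>) - loglik (p n) \<theta> (Y n \<omega>)))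
              (chi2_distribution CARD('p))"
    and b: "\<exists>R. small_o_p_1 M R \<and>
              (\<forall>n. \<forall>\<omega>\<in>space M.
                 marginal \<Theta> (p n) \<pi> (Y n \<omega>) =
                   p n (Y n \<omega>) (\<theta>hat n (Y n \<omega>)) * \<pi> (\<theta>hat n (Y n \<omega>))
                   * (2 * pi) powr (real CARD('p) / 2)
                   * det (obs_info (p n) (\<theta>hat n (Y n \<omega>)) (Y n \<omega>)) powr (- 1 / 2)
                   * (1 + R n \<omega>))"
    and c1: "big_O_p_1 M (\<lambda>n \<omega>. \<pi> (\<theta>hat n (Y n \<omega>)))"
    and c2: "big_O_p_1 M (\<lambda>n \<omega>. ln (det (obs_info (p n) (\<theta>hat n (Y n \<omega>)) (Y n \<omega>)))
                                     - real CARD('p) * ln (real n))"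
  shows "(\<lambda>n. measure M {\<omega>\<in>space M. \<theta> \<in> robbins_region \<Theta> (p n) \<pi> \<epsilon> (Y n \<omega>)}) \<longlonglongrightarrow> 1"
proof -
  have k: "CARD('p) \<ge> 1"
    by (simp add: Suc_leI)
  obtain R where R: "small_o_p_1 M R" and laplace: "\<And>n \<omega>. \<omega> \<in> space M \<Longrightarrow>
      marginal \<Theta> (p n) \<pi> (Y n \<omega>) =
        p n (Y n \<omega>) (\<theta>hat n (Y n \<omega>)) * \<pi> (\<theta>hat n (Y n \<omega>))
        * (2 * pi) powr (real CARD('p) / 2)
        * det (obs_info (p n) (\<theta>hat n (Y n \<omega>)) (Y n \<omega>)) powr (- 1 / 2)
        * (1 + R n \<omega>)"
    using b by blast
  let ?U = "\<lambda>n \<omega>. exp (2 * (loglik (p n) (\<theta>hat n (Y n \<omega>)) (Y n \<omega>) - loglik (p n) \<theta> (Y n \<omega>)) / 2)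
      * \<bar>\<pi> (\<theta>hat n (Y n \<omega>))\<bar>
      * exp (\<bar>ln (det (obs_info (p n) (\<theta>hat n (Y n \<omega>)) (Y n \<omega>))) - real CARD('p) * ln (real n)\<bar> / 2)
      * (1 + \<bar>R n \<omega>\<bar>)"
  let ?a = "\<lambda>n. \<epsilon> * (2 * pi) powr (real CARD('p) / 2) * exp (- (real CARD('p) * ln (real n)) / 2)"
  have "bounded_above_in_prob M ?U"
    by (rule bounded_above_in_prob_laplace_factor[OF M real_distribution_chi2[OF k] a c1 c2 R])
  moreover have "?a \<longlonglongrightarrow> 0"
    using tendsto_mult_left[OF tendsto_exp_neg_half_ln_power[OF k]] by simp
  moreover have "?a n \<ge> 0" for n
    using \<epsilon>_pos by simp
  moreover have "{\<omega>\<in>space M. \<theta> \<in> robbins_region \<Theta> (p n) \<pi> \<epsilon> (Y n \<omega>)} \<in> sets M" for n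
    using distributed_measurable[OF Y_distr] \<Theta>_open \<theta>_in \<pi>_meas p_meas
    by (rule robbins_event_measurable)
  moreover have "{\<omega>\<in>space M. ?U n \<omega> * ?a n \<le> 1}
      \<subseteq> {\<omega>\<in>space M. \<theta> \<in> robbins_region \<Theta> (p n) \<pi> \<epsilon> (Y n \<omega>)}" for n
  proof clarify
    fix \<omega> assume \<omega>: "\<omega> \<in> space M" and small: "?U n \<omega> * ?a n \<le> 1"
    have y: "Y n \<omega> \<in> space (\<nu> n)"
      using measurable_space[OF distributed_measurable[OF Y_distr] \<omega>] .
    have "\<epsilon> * marginal \<Theta> (p n) \<pi> (Y n \<omega>) \<le> p n (Y n \<omega>) \<theta>"
      unfolding laplace[OF \<omega>]
      using small \<epsilon>_pos p_pos[OF y \<theta>_in] p_pos[OF y \<theta>hat_in[OF y]]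
      by (intro laplace_approx_le_density[where nk = "real CARD('p) * ln (real n)"])
        (auto simp: loglik_def mult.assoc diff_divide_distrib)
    then show "\<theta> \<in> robbins_region \<Theta> (p n) \<pi> \<epsilon> (Y n \<omega>)"
      using \<theta>_in by (simp add: robbins_region_def)
  qed
  ultimately show ?thesis
    by (rule prob_tendsto_one_if_scaled_bounded_above_le_one[OF M])
qed

end
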